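(* Let $G$ be an ordered graph, let $xy\in E(G)$ and $i\in\mathbb N$. If $\mathrm{h}_G(xy)>i$, then there is an edge $xz\in E(G)$ with $\mathrm{h}_G(xz)=i$ and $\mathrm{v}_G(xz)=x$.
   Context: An ordered graph is a finite simple graph $G$ equipped with a total order $\le_G$ on $E(G)$ and a total order $\le^V_G$ on $V(G)$. Let $\mathbb N=\{1,2,\dots\}$. Define $\preceq_{\mathrm{lex}}$ on $\mathbb N\times V(G)$ by $(i,v)\preceq_{\mathrm{lex}}(i',v')$ iff $i<i'$, or $i=i'$ and $v\le^V_G v'$. The height table $\mathrm{HT}(G)$ is a partially filled array indexed by $\mathbb N\times V(G)$, built by going through all $(i,v)$ in $\preceq_{\mathrm{lex}}$-increasing order and setting the entry at $(i,v)$ to be the $\le_G$-largest edge containing $v$ not yet entered into the table (blank if none remain). Every edge is entered exactly once; $\mathrm{ht}_G(e)=(\mathrm{h}_G(e),\mathrm{v}_G(e))$ is the position of $e$, with $\mathrm{h}_G(e)$ its row and $\mathrm{v}_G(e)$ its column. *)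

theory Defs
  imports Main
begin

definition ordered_graph :: "'v set \<Rightarrow> 'v set set \<Rightarrow> 'v rel \<Rightarrow> 'v set rel \<Rightarrow> bool" where
  "ordered_graph V E rV rE \<longleftrightarrow>
     finite V \<and> (\<forall>e\<in>E. \<exists>a b. a \<in> V \<and> b \<in> V \<and> a \<noteq> b \<and> e = {a, b}) \<and>
     linear_order_on V rV \<and> linear_order_on E rE"

definition vlist :: "'v set \<Rightarrow> 'v rel \<Rightarrow> 'v list" where
  "vlist V rV = (SOME xs. set xs = V \<and> distinct xs \<and> sorted_wrt (\<lambda>a b. (a, b) \<in> rV) xs)"

definition maxedge :: "'v set rel \<Rightarrow> 'v set set \<Rightarrow> 'v \<Rightarrow> 'v set option" where
  "maxedge rE R v = (if \<exists>e\<in>R. v \<in> e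
      then Some (THE e. e \<in> R \<and> v \<in> e \<and> (\<forall>e'\<in>R. v \<in> e' \<longrightarrow> (e', e) \<in> rE))
      else None)"

fun row_fill :: "'v set rel \<Rightarrow> 'v set set \<Rightarrow> 'v list \<Rightarrow> ('v \<Rightarrow> 'v set option) \<times> 'v set set" where
  "row_fill rE R [] = (\<lambda>_. None, R)"
| "row_fill rE R (v # vs) =
     (let c = maxedge rE R v;
          (t, R'') = row_fill rE (R - set_option c) vs
      in (t(v := c), R''))"

text \<open>Edges not yet entered before row Suc k (rows are numbered 1,2,...).\<close>
fun remaining :: "'v set \<Rightarrow> 'v set set \<Rightarrow> 'v rel \<Rightarrow> 'v set rel \<Rightarrow> nat \<Rightarrow> 'v set set" where
  "remaining V E rV rE 0 = E"
| "remaining V E rV rE (Suc k) = snd (row_fill rE (remaining V E rV rE k) (vlist V rV))"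

text \<open>The height table: entry at (i, v), i \<ge> 1; None = blank.\<close>
definition HT :: "'v set \<Rightarrow> 'v set set \<Rightarrow> 'v rel \<Rightarrow> 'v set rel \<Rightarrow> nat \<Rightarrow> 'v \<Rightarrow> 'v set option" where
  "HT V E rV rE i v = (if i = 0 then None
      else fst (row_fill rE (remaining V E rV rE (i - 1)) (vlist V rV)) v)"

definition ht :: "'v set \<Rightarrow> 'v set set \<Rightarrow> 'v rel \<Rightarrow> 'v set rel \<Rightarrow> 'v set \<Rightarrow> nat \<times> 'v" where
  "ht V E rV rE e = (THE p. 1 \<le> fst p \<and> snd p \<in> V \<and> HT V E rV rE (fst p) (snd p) = Some e)"

definition hrow :: "'v set \<Rightarrow> 'v set set \<Rightarrow> 'v rel \<Rightarrow> 'v set rel \<Rightarrow> 'v set \<Rightarrow> nat" where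
  "hrow V E rV rE e = fst (ht V E rV rE e)"

definition vcol :: "'v set \<Rightarrow> 'v set set \<Rightarrow> 'v rel \<Rightarrow> 'v set rel \<Rightarrow> 'v set \<Rightarrow> 'v" where
  "vcol V E rV rE e = snd (ht V E rV rE e)"

end

theory Submission imports Defs begin

text \<open>Row \<open>i\<close> is filled by visiting the columns in order and entering at column \<open>v\<close> the
largest edge at \<open>v\<close> that has not been entered yet. An edge of height greater than \<open>i\<close> is
still unentered after row \<open>i\<close>, so when column \<open>x\<close> of row \<open>i\<close> was visited some edge at \<open>x\<close>
was available. Hence the entry at \<open>(i, x)\<close> is an edge \<open>xz\<close>, and since every edge occupies
exactly one cell of the table, \<open>(i, x)\<close> is its position.\<close>

lemma linear_order_on_finite_has_greatest:
  assumes "linear_order_on A r" "finite S" "S \<noteq> {}" "S \<subseteq> A"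
  shows "\<exists>m\<in>S. \<forall>s\<in>S. (s, m) \<in> r"
  using assms(2-4)
proof (induction S rule: finite_ne_induct)
  case (singleton a)
  then show ?case using assms(1) by (auto simp: order_on_defs refl_on_def)
next
  case (insert a S)
  then obtain m where m: "m \<in> S" "\<forall>s\<in>S. (s, m) \<in> r" by auto
  have A: "a \<in> A" "m \<in> A" using insert.prems m(1) by auto
  have "refl_on A r" "trans r" "total_on A r" using assms(1) by (simp_all add: order_on_defs)
  then consider "(a, m) \<in> r" | "(m, a) \<in> r" "(a, a) \<in> r"
    using A by (cases "a = m") (auto simp: total_on_def refl_on_def)
  then show ?case
    using m \<open>trans r\<close> by cases (auto dest: transD)
qed

lemma linear_order_on_finite_has_least:
  assumes "linear_order_on A r" "finite S" "S \<noteq> {}" "S \<subseteq> A"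
  shows "\<exists>m\<in>S. \<forall>s\<in>S. (m, s) \<in> r"
  using linear_order_on_finite_has_greatest[OF linear_order_on_converse[THEN iffD2, OF assms(1)]]
    assms(2-4) by auto

lemma linear_order_on_finite_sorted_list:
  assumes "linear_order_on A r" "finite S" "S \<subseteq> A"
  shows "\<exists>xs. set xs = S \<and> distinct xs \<and> sorted_wrt (\<lambda>a b. (a, b) \<in> r) xs"
  using assms(2,3)
proof (induction S rule: finite_remove_induct)
  case empty
  then show ?case by simp
next
  case (remove S)
  then obtain m where m: "m \<in> S" "\<forall>s\<in>S. (m, s) \<in> r"
    using linear_order_on_finite_has_least[OF assms(1)] by blast
  with remove obtain xs where "set xs = S - {m}" "distinct xs" "sorted_wrt (\<lambda>a b. (a, b) \<in> r) xs"
    by blast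
  with m show ?case by (intro exI[of _ "m # xs"]) auto
qed

lemma row_fill_Cons:
  "row_fill rE R (v # vs) =
     (let c = maxedge rE R v; p = row_fill rE (R - set_option c) vs in ((fst p)(v := c), snd p))"
  by (simp add: Let_def split_def)

declare row_fill.simps(2) [simp del]

lemma row_fill_entry_notin: "v \<notin> set vs \<Longrightarrow> fst (row_fill rE R vs) v = None"
  by (induction vs arbitrary: R) (auto simp: row_fill_Cons Let_def)

lemma row_fill_remaining_subset: "snd (row_fill rE R vs) \<subseteq> R"
  by (induction vs arbitrary: R) (fastforce simp: row_fill_Cons Let_def)+

lemma row_fill_entry_nonblank:
  "x \<in> set vs \<Longrightarrow> e \<in> snd (row_fill rE R vs) \<Longrightarrow> x \<in> e \<Longrightarrow> fst (row_fill rE R vs) x \<noteq> None"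
proof (induction vs arbitrary: R)
  case Nil
  then show ?case by simp
next
  case (Cons w vs)
  let ?R' = "R - set_option (maxedge rE R w)"
  have e: "e \<in> snd (row_fill rE ?R' vs)"
    using Cons.prems(2) by (simp add: row_fill_Cons Let_def)
  show ?case
  proof (cases "x = w")
    case True
    have "e \<in> R" using e row_fill_remaining_subset by blast
    with True Cons.prems(3) have "maxedge rE R w \<noteq> None" by (auto simp: maxedge_def)
    with True show ?thesis by (simp add: row_fill_Cons Let_def)
  next
    case False
    with Cons.IH[OF _ e] Cons.prems show ?thesis by (simp add: row_fill_Cons Let_def)
  qed
qed

context
  fixes E :: "'v set set" and rE :: "'v set rel"
  assumes finite_edges: "finite E" and linear_edges: "linear_order_on E rE"
begin

lemma maxedge_SomeD:
  assumes "maxedge rE R v = Some e" "R \<subseteq> E"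
  shows "e \<in> R \<and> v \<in> e"
proof -
  let ?S = "{e \<in> R. v \<in> e}"
  have "?S \<noteq> {}" using assms(1) by (auto simp: maxedge_def split: if_splits)
  moreover have "finite ?S" using assms(2) finite_edges by (auto intro: finite_subset)
  ultimately obtain m where m: "m \<in> ?S" "\<forall>s\<in>?S. (s, m) \<in> rE"
    using linear_order_on_finite_has_greatest[OF linear_edges] assms(2) by blast
  have "antisym rE" using linear_edges by (simp add: order_on_defs)
  then have "(THE e. e \<in> R \<and> v \<in> e \<and> (\<forall>e'\<in>R. v \<in> e' \<longrightarrow> (e', e) \<in> rE)) = m"
    using m by (auto intro!: the_equality dest: antisymD)
  with assms(1) m show ?thesis by (auto simp: maxedge_def split: if_splits)
qed

lemma row_fill_entryD:
  "R \<subseteq> E \<Longrightarrow> fst (row_fill rE R vs) v = Some e \<Longrightarrow> e \<in> R \<and> v \<in> e"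
proof (induction vs arbitrary: R)
  case Nil
  then show ?case by simp
next
  case (Cons w vs)
  then show ?case
    using Cons.IH[of "R - set_option (maxedge rE R w)"] maxedge_SomeD
    by (fastforce simp: row_fill_Cons Let_def split: if_splits)
qed

lemma row_fill_remaining:
  "R \<subseteq> E \<Longrightarrow> distinct vs \<Longrightarrow> snd (row_fill rE R vs) = R - ran (fst (row_fill rE R vs))"
proof (induction vs arbitrary: R)
  case Nil
  then show ?case by simp
next
  case (Cons w vs)
  define c where "c = maxedge rE R w"
  define p where "p = row_fill rE (R - set_option c) vs"
  have R': "R - set_option c \<subseteq> E" using Cons.prems(1) by auto
  have IH: "snd p = R - set_option c - ran (fst p)"
    using Cons.IH[OF R'] Cons.prems(2) by (simp add: p_def)
  have entries: "ran (fst p) \<subseteq> R - set_option c"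
    using row_fill_entryD[OF R'] by (auto simp: p_def ran_def)
  have "fst p w = None" using Cons.prems(2) by (simp add: p_def row_fill_entry_notin)
  then have ran_upd: "ran ((fst p)(w := c)) = set_option c \<union> ran (fst p)"
    by (cases c) (simp_all add: ran_map_upd fun_upd_idem)
  have row: "row_fill rE R (w # vs) = ((fst p)(w := c), snd p)"
    by (simp add: row_fill_Cons Let_def c_def p_def)
  show ?case
    unfolding row fst_conv snd_conv ran_upd using IH entries by auto
qed

lemma row_fill_entry_inj:
  "R \<subseteq> E \<Longrightarrow> distinct vs \<Longrightarrow> fst (row_fill rE R vs) v = Some e \<Longrightarrow>
     fst (row_fill rE R vs) u = Some e \<Longrightarrow> v = u"
proof (induction vs arbitrary: R v u)
  case Nil
  then show ?case by simp
next
  case (Cons w vs)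
  define c where "c = maxedge rE R w"
  define p where "p = row_fill rE (R - set_option c) vs"
  have R': "R - set_option c \<subseteq> E" using Cons.prems(1) by auto
  have not_c: "fst p q = Some e \<Longrightarrow> c \<noteq> Some e" for q
    using row_fill_entryD[OF R'] by (auto simp: p_def)
  have IH: "fst p v' = Some e \<Longrightarrow> fst p u' = Some e \<Longrightarrow> v' = u'" for v' u'
    using Cons.IH[OF R'] Cons.prems(2) by (simp add: p_def)
  have "row_fill rE R (w # vs) = ((fst p)(w := c), snd p)"
    by (simp add: row_fill_Cons Let_def c_def p_def)
  then have "((fst p)(w := c)) v = Some e" "((fst p)(w := c)) u = Some e"
    using Cons.prems(3,4) by simp_all
  then show ?case
    using not_c IH by (cases "v = w"; cases "u = w") auto
qed

end

context
  fixes V :: "'v set" and E :: "'v set set" and rV :: "'v rel" and rE :: "'v set rel"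
  assumes og: "ordered_graph V E rV rE"
begin

lemma edge_doubleton: "e \<in> E \<Longrightarrow> \<exists>a b. a \<in> V \<and> b \<in> V \<and> a \<noteq> b \<and> e = {a, b}"
  using og by (simp add: ordered_graph_def)

lemma ordered_graph_finite_edges: "finite E"
proof -
  have "E \<subseteq> Pow V" using edge_doubleton by blast
  with og show ?thesis by (auto simp: ordered_graph_def intro: finite_subset)
qed

lemma ordered_graph_linear_order_edges: "linear_order_on E rE"
  using og by (simp add: ordered_graph_def)

lemma set_vlist: "set (vlist V rV) = V" and distinct_vlist: "distinct (vlist V rV)"
proof -
  have "\<exists>xs. set xs = V \<and> distinct xs \<and> sorted_wrt (\<lambda>a b. (a, b) \<in> rV) xs"
    using og linear_order_on_finite_sorted_list by (auto simp: ordered_graph_def)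
  from someI_ex[OF this] show "set (vlist V rV) = V" "distinct (vlist V rV)"
    by (auto simp: vlist_def)
qed

lemma HT_0 [simp]: "HT V E rV rE 0 v = None"
  by (simp add: HT_def)

lemma HT_Suc: "HT V E rV rE (Suc k) = fst (row_fill rE (remaining V E rV rE k) (vlist V rV))"
  by (simp add: HT_def fun_eq_iff)

lemma remaining_subset: "remaining V E rV rE k \<subseteq> E"
  by (induction k) (auto dest: row_fill_remaining_subset[THEN subsetD])

lemma remaining_Suc: "remaining V E rV rE (Suc k) = remaining V E rV rE k - ran (HT V E rV rE (Suc k))"
  using row_fill_remaining[OF ordered_graph_finite_edges ordered_graph_linear_order_edges
      remaining_subset distinct_vlist]
  by (simp add: HT_Suc)

declare remaining.simps(2) [simp del]

lemma remaining_antimono: "k \<le> k' \<Longrightarrow> remaining V E rV rE k' \<subseteq> remaining V E rV rE k"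
  by (induction k' rule: dec_induct) (auto simp: remaining_Suc)

lemma HT_SomeD: "HT V E rV rE (Suc k) v = Some e \<Longrightarrow> e \<in> remaining V E rV rE k \<and> v \<in> e"
  using row_fill_entryD[OF ordered_graph_finite_edges ordered_graph_linear_order_edges remaining_subset]
  by (simp add: HT_Suc)

lemma HT_row_unique:
  assumes "HT V E rV rE k v = Some e" "HT V E rV rE k' v' = Some e"
  shows "k = k'"
proof -
  have "k \<le> k'" if entry: "HT V E rV rE k v = Some e" and entry': "HT V E rV rE k' v' = Some e"
    for k k' v v'
  proof (rule ccontr)
    assume "\<not> k \<le> k'"
    obtain j j' where j: "k = Suc j" "k' = Suc j'"
      using entry entry' by (cases k; cases k') auto
    have "e \<in> remaining V E rV rE j" using entry j(1) HT_SomeD by blast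
    also have "\<dots> \<subseteq> remaining V E rV rE (Suc j')"
      using \<open>\<not> k \<le> k'\<close> j by (intro remaining_antimono) simp
    finally have "e \<notin> ran (HT V E rV rE k')"
      using j(2) by (simp add: remaining_Suc)
    with entry' show False by (simp add: ranI)
  qed
  from this[OF assms] this[OF assms(2,1)] show ?thesis by (rule antisym)
qed

lemma HT_column_unique:
  assumes "HT V E rV rE k v = Some e" "HT V E rV rE k v' = Some e"
  shows "v = v'"
proof -
  obtain j where "k = Suc j" using assms by (cases k) auto
  with assms show ?thesis
    using row_fill_entry_inj[OF ordered_graph_finite_edges ordered_graph_linear_order_edges
        remaining_subset distinct_vlist]
    by (simp add: HT_Suc)
qed

lemma ht_eqI:
  assumes "HT V E rV rE k v = Some e"
  shows "ht V E rV rE e = (k, v)"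
proof -
  obtain j where "k = Suc j" using assms by (cases k) auto
  with assms have "v \<in> V" using HT_SomeD remaining_subset edge_doubleton by blast
  have "p = (k, v)" if "HT V E rV rE (fst p) (snd p) = Some e" for p
    using HT_row_unique[OF assms that] HT_column_unique[OF assms] that by (metis prod.collapse)
  with assms \<open>v \<in> V\<close> \<open>k = Suc j\<close> show ?thesis
    unfolding ht_def by (intro the_equality) auto
qed

lemma remaining_if_hrow_gt: "e \<in> E \<Longrightarrow> k < hrow V E rV rE e \<Longrightarrow> e \<in> remaining V E rV rE k"
proof (induction k)
  case 0
  then show ?case by simp
next
  case (Suc k)
  have "HT V E rV rE (Suc k) v \<noteq> Some e" for v
    using Suc.prems(2) ht_eqI by (auto simp: hrow_def)
  with Suc show ?case using remaining_Suc[of k] by (auto simp: ran_def)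
qed

lemma HT_nonblank:
  assumes "e \<in> remaining V E rV rE (Suc k)" "x \<in> e"
  shows "HT V E rV rE (Suc k) x \<noteq> None"
proof -
  have "x \<in> V" using assms remaining_subset edge_doubleton by blast
  with assms show ?thesis
    using row_fill_entry_nonblank[of x "vlist V rV" e rE "remaining V E rV rE k"]
    by (simp add: HT_Suc set_vlist remaining.simps)
qed

end

theorem mainTheorem13:
  fixes V :: "'v set" and E :: "'v set set" and rV :: "'v rel" and rE :: "'v set rel"
    and x y :: 'v and i :: nat
  assumes "ordered_graph V E rV rE"
    and "{x, y} \<in> E"
    and "1 \<le> i"
    and "hrow V E rV rE {x, y} > i"
  shows "\<exists>z. {x, z} \<in> E \<and> hrow V E rV rE {x, z} = i \<and> vcol V E rV rE {x, z} = x"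
proof -
  note og = assms(1)
  obtain k where i: "i = Suc k" using assms(3) by (cases i) auto
  have "{x, y} \<in> remaining V E rV rE i"
    using remaining_if_hrow_gt[OF og assms(2,4)] .
  then obtain e where e: "HT V E rV rE i x = Some e"
    using HT_nonblank[OF og] i by blast
  then have "e \<in> E" "x \<in> e"
    using HT_SomeD[OF og] remaining_subset[OF og] i by blast+
  then obtain z where "e = {x, z}"
    using edge_doubleton[OF og] by blast
  with e \<open>e \<in> E\<close> show ?thesis
    using ht_eqI[OF og e] by (auto simp: hrow_def vcol_def)
qed

end
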